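(* Let $A$ be a combination matrix of the weakly-connected form described in the context, with $W=T_{SR}(I-T_{RR})^{-1}$, and let $\mathcal{A}=A\otimes I_M$ and $\mathcal{W}=W\otimes I_M$. For vectors $w_1^\star,\dots,w_S^\star\in\mathbb{R}^M$ (the Pareto solutions of the sub-networks of group $S$) let $\omega^\star=\mathrm{col}\{\mathbb{1}_{N_1}\otimes w_1^\star,\dots,\mathbb{1}_{N_S}\otimes w_S^\star\}\in\mathbb{R}^{N_{gS}M}$, $\omega^\bullet=\mathcal{W}^{\mathsf T}\omega^\star\in\mathbb{R}^{N_{gR}M}$ and $\omega_\infty=\mathrm{col}\{\omega^\star,\omega^\bullet\}\in\mathbb{R}^{NM}$. Then $\omega_\infty=\mathcal{A}^{\mathsf T}\omega_\infty$. Moreover, $\omega_\infty$ is the unique solution $x\in\mathbb{R}^{NM}$ of $x=\mathcal{A}^{\mathsf T}x$ whose first $N_{gS}M$ entries equal $\omega^\star$.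
   Context: $N$ agents are partitioned into sub-networks $1,\dots,S+R$ ($S\ge 1$), sub-network $j$ having $N_j$ agents; agents of sub-networks $1,\dots,S$ (group $S$, $N_{gS}=N_1+\cdots+N_S$ agents) come first, then those of sub-networks $S+1,\dots,S+R$ (group $R$, $N_{gR}$ agents). The combination matrix $A=[a_{\ell k}]$ is nonnegative, left-stochastic ($A^{\mathsf T}\mathbb{1}=\mathbb{1}$), and of the block form $A=\begin{bmatrix}T_{SS}&T_{SR}\\0&T_{RR}\end{bmatrix}$, where $T_{SS}=\mathrm{blockdiag}\{A_1,\dots,A_S\}$ with each $A_s\in\mathbb{R}^{N_s\times N_s}$ left-stochastic and primitive, and $T_{RR}$ is block upper triangular with diagonal blocks $A_{S+1},\dots,A_{S+R}$; each $A_r$ ($r>S$) is the nonnegative irreducible matrix of weights internal to a connected sub-network $r$ that receives information from outside it, so that at least one column of $A_r$ sums to strictly less than one. (Under these conditions $I-T_{RR}$ is invertible.) $\mathrm{col}\{\cdot\}$ denotes vertical stacking and $\otimes$ the Kronecker product. *)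

theory Defs
  imports "Jordan_Normal_Form.Gauss_Jordan_Elimination"
begin

definition kron_mat :: "'a::times mat \<Rightarrow> 'a mat \<Rightarrow> 'a mat" where
  "kron_mat A B = mat (dim_row A * dim_row B) (dim_col A * dim_col B)
     (\<lambda>(i,j). A $$ (i div dim_row B, j div dim_col B) * B $$ (i mod dim_row B, j mod dim_col B))"

definition kron_vec :: "'a::times vec \<Rightarrow> 'a vec \<Rightarrow> 'a vec" where
  "kron_vec v u = vec (dim_vec v * dim_vec u) (\<lambda>i. v $ (i div dim_vec u) * u $ (i mod dim_vec u))"

definition ones_vec :: "nat \<Rightarrow> 'a::one vec" where
  "ones_vec n = vec n (\<lambda>_. 1)"

definition vcol :: "'a::zero vec list \<Rightarrow> 'a vec" where
  "vcol vs = foldr (\<lambda>v w. v @\<^sub>v w) vs (vec 0 (\<lambda>_. 0))"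

(* offset of sub-network j (0-based) among the agents: N_0 + ... + N_{j-1} *)
definition offs :: "(nat \<Rightarrow> nat) \<Rightarrow> nat \<Rightarrow> nat" where
  "offs Nsz j = (\<Sum>i<j. Nsz i)"

definition subblock :: "'a mat \<Rightarrow> (nat \<Rightarrow> nat) \<Rightarrow> nat \<Rightarrow> 'a mat" where
  "subblock A Nsz j = mat (Nsz j) (Nsz j) (\<lambda>(a,b). A $$ (offs Nsz j + a, offs Nsz j + b))"

definition nonneg_mat :: "real mat \<Rightarrow> bool" where
  "nonneg_mat B \<longleftrightarrow> (\<forall>i<dim_row B. \<forall>j<dim_col B. B $$ (i,j) \<ge> 0)"

definition left_stochastic :: "real mat \<Rightarrow> bool" where
  "left_stochastic B \<longleftrightarrow> dim_row B = dim_col B \<and> nonneg_mat B \<and>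
     (\<forall>k<dim_col B. (\<Sum>l<dim_row B. B $$ (l,k)) = 1)"

definition primitive_mat :: "real mat \<Rightarrow> bool" where
  "primitive_mat B \<longleftrightarrow> dim_row B = dim_col B \<and> nonneg_mat B \<and>
     (\<exists>m. \<forall>i<dim_row B. \<forall>j<dim_row B. (B ^\<^sub>m m) $$ (i,j) > 0)"

definition irreducible_mat :: "real mat \<Rightarrow> bool" where
  "irreducible_mat B \<longleftrightarrow> dim_row B = dim_col B \<and> nonneg_mat B \<and>
     (\<forall>i<dim_row B. \<forall>j<dim_row B. \<exists>m. (B ^\<^sub>m m) $$ (i,j) > 0)"

definition T_SR :: "'a mat \<Rightarrow> nat \<Rightarrow> nat \<Rightarrow> 'a mat" where
  "T_SR A NgS NgR = mat NgS NgR (\<lambda>(i,k). A $$ (i, NgS + k))"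

definition T_RR :: "'a mat \<Rightarrow> nat \<Rightarrow> nat \<Rightarrow> 'a mat" where
  "T_RR A NgS NgR = mat NgR NgR (\<lambda>(i,k). A $$ (NgS + i, NgS + k))"

definition W_mat :: "real mat \<Rightarrow> nat \<Rightarrow> nat \<Rightarrow> real mat" where
  "W_mat A NgS NgR = T_SR A NgS NgR * the (mat_inverse (1\<^sub>m NgR - T_RR A NgS NgR))"

end

theory Submission
  imports Defs "Jordan_Normal_Form.Determinant"
begin

text \<open>Since \<open>\<A> = A \<otimes> I\<^sub>M\<close> acts on each of the \<open>M\<close> coordinate slices of a vector separately,
  it suffices to treat a single slice. There \<open>A\<^sup>T = [T\<^sub>S\<^sub>S\<^sup>T 0; T\<^sub>S\<^sub>R\<^sup>T T\<^sub>R\<^sub>R\<^sup>T]\<close>, and the slice of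
  \<open>\<omega>\<^sup>\<star>\<close> is constant on every sub-network of group \<open>S\<close>, hence fixed by the block-diagonal,
  column-stochastic \<open>T\<^sub>S\<^sub>S\<^sup>T\<close>. A fixed point of \<open>A\<^sup>T\<close> with this top part therefore has a bottom
  part \<open>z\<close> with \<open>(I - T\<^sub>R\<^sub>R)\<^sup>T z = T\<^sub>S\<^sub>R\<^sup>T \<omega>\<^sup>\<star>\<close>, i.e. \<open>z = W\<^sup>T \<omega>\<^sup>\<star>\<close>.

  Invertibility of \<open>I - T\<^sub>R\<^sub>R\<close> is a Perron-Frobenius type argument: for \<open>v\<close> in its kernel,
  \<open>|v|\<close> is subinvariant under \<open>T\<^sub>R\<^sub>R\<close>. Going backwards through the sub-networks of group \<open>R\<close>,
  each of which only receives from later ones, \<open>|v|\<close> restricted to a sub-network is subinvariant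
  under its irreducible, substochastic and somewhere deficient block, and hence zero.\<close>

lemma sum_lessThan_add:
  fixes a b :: nat
  shows "(\<Sum>q<a + b. f q) = (\<Sum>q<a. f q) + (\<Sum>r<b. (f (a + r) :: 'a::comm_monoid_add))"
  by (induction b) (auto simp: add.assoc)

lemma sum_lessThan_mult:
  fixes n M :: nat
  shows "(\<Sum>j<n * M. f j) = (\<Sum>q<n. \<Sum>t<M. (f (q * M + t) :: 'a::comm_monoid_add))"
proof -
  have "sum f {q * M..<q * M + M} = (\<Sum>t<M. f (q * M + t))" for q
    using sum.shift_bounds_nat_ivl[of f 0 "q * M" M] by (simp add: lessThan_atLeast0 add.commute)
  then show ?thesis by (simp add: sum.nat_group[symmetric])
qed

lemma mult_add_less_mult:
  fixes p m n M :: nat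
  assumes "p < n" "m < M" shows "p * M + m < n * M"
proof -
  have "p * M + m < (p + 1) * M" using assms by simp
  also have "\<dots> \<le> n * M" using assms by (intro mult_right_mono) auto
  finally show ?thesis .
qed

lemma mult_mat_vec_index_sum:
  "A \<in> carrier_mat nr n \<Longrightarrow> v \<in> carrier_vec n \<Longrightarrow> i < nr \<Longrightarrow> (A *\<^sub>v v) $ i = (\<Sum>k<n. A $$ (i,k) * v $ k)"
  by (simp add: scalar_prod_def lessThan_atLeast0)

lemma offs_Suc: "offs Nsz (Suc j) = offs Nsz j + Nsz j"
  by (simp add: offs_def)

lemma offs_mono: "i \<le> j \<Longrightarrow> offs Nsz i \<le> offs Nsz j"
  unfolding offs_def by (rule sum_mono2) auto

definition block_of :: "(nat \<Rightarrow> nat) \<Rightarrow> nat \<Rightarrow> nat" where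
  "block_of Nsz p = (LEAST j. p < offs Nsz (Suc j))"

lemma block_of_bounds:
  assumes "p < offs Nsz n"
  shows "block_of Nsz p < n" "offs Nsz (block_of Nsz p) \<le> p" "p < offs Nsz (Suc (block_of Nsz p))"
proof -
  have n: "n > 0" using assms by (cases n) (auto simp: offs_def)
  have ex: "p < offs Nsz (Suc (n - 1))" using assms n by simp
  show "p < offs Nsz (Suc (block_of Nsz p))"
    unfolding block_of_def by (rule LeastI[of "\<lambda>j. p < offs Nsz (Suc j)", OF ex])
  have "block_of Nsz p \<le> n - 1"
    unfolding block_of_def by (rule Least_le[of "\<lambda>j. p < offs Nsz (Suc j)", OF ex])
  then show "block_of Nsz p < n" using n by simp
  show "offs Nsz (block_of Nsz p) \<le> p"
  proof (cases "block_of Nsz p")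
    case (Suc k)
    then have "\<not> p < offs Nsz (Suc k)"
      unfolding block_of_def by (intro not_less_Least) simp
    then show ?thesis using Suc by simp
  qed (simp add: offs_def)
qed

lemma block_of_offs_add:
  assumes "a < Nsz j" shows "block_of Nsz (offs Nsz j + a) = j"
  unfolding block_of_def
proof (rule Least_equality)
  show "offs Nsz j + a < offs Nsz (Suc j)" using assms by (simp add: offs_Suc)
  fix i assume "offs Nsz j + a < offs Nsz (Suc i)"
  then show "j \<le> i" using offs_mono[of "Suc i" j Nsz] by (cases "j \<le> i") auto
qed

lemma block_of_decomp:
  assumes "p < offs Nsz n"
  obtains a where "p = offs Nsz (block_of Nsz p) + a" "a < Nsz (block_of Nsz p)"
  using block_of_bounds[OF assms] by (metis le_add_diff_inverse nat_add_left_cancel_less offs_Suc)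

lemma block_of_less_iff:
  assumes "p < offs Nsz n" shows "block_of Nsz p < j \<longleftrightarrow> p < offs Nsz j"
proof
  assume "block_of Nsz p < j"
  then show "p < offs Nsz j"
    using block_of_bounds(3)[OF assms] offs_mono[of "Suc (block_of Nsz p)" j Nsz] by simp
next
  assume "p < offs Nsz j"
  then show "block_of Nsz p < j"
    using block_of_bounds(2)[OF assms] offs_mono[of j "block_of Nsz p" Nsz] by (cases "j \<le> block_of Nsz p") auto
qed

lemma sum_lessThan_offs_block:
  assumes j: "j < n" and outside: "\<forall>q<offs Nsz n. block_of Nsz q \<noteq> j \<longrightarrow> f q = 0"
  shows "(\<Sum>q<offs Nsz n. f q) = (\<Sum>a<Nsz j. f (offs Nsz j + a))"
proof -
  let ?block = "(\<lambda>a. offs Nsz j + a) ` {..<Nsz j}"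
  have block_sub: "?block \<subseteq> {..<offs Nsz n}"
    using offs_mono[of "Suc j" n Nsz] j by (auto simp: offs_Suc)
  have "(\<Sum>q<offs Nsz n. f q) = sum f ?block"
  proof (rule sum.mono_neutral_right[OF _ block_sub])
    show "\<forall>q\<in>{..<offs Nsz n} - ?block. f q = 0"
    proof
      fix q assume q: "q \<in> {..<offs Nsz n} - ?block"
      then obtain a where a: "q = offs Nsz (block_of Nsz q) + a" "a < Nsz (block_of Nsz q)"
        using block_of_decomp[of q Nsz n] by auto
      then have "block_of Nsz q \<noteq> j" using q by auto
      then show "f q = 0" using outside q by auto
    qed
  qed simp
  also have "\<dots> = (\<Sum>a<Nsz j. f (offs Nsz j + a))" by (simp add: sum.reindex)
  finally show ?thesis .
qed

section \<open>Irreducible substochastic matrices\<close>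

lemma pow_mat_nonneg:
  fixes B :: "real mat"
  assumes B: "B \<in> carrier_mat n n" and nonneg: "\<forall>i<n. \<forall>j<n. 0 \<le> B $$ (i,j)"
  shows "i < n \<Longrightarrow> j < n \<Longrightarrow> 0 \<le> (B ^\<^sub>m k) $$ (i,j)"
proof (induction k arbitrary: j)
  case (Suc k)
  have "(B ^\<^sub>m Suc k) $$ (i,j) = (\<Sum>l<n. (B ^\<^sub>m k) $$ (i,l) * B $$ (l,j))"
    using B Suc.prems by (simp add: scalar_prod_def lessThan_atLeast0)
  also have "\<dots> \<ge> 0" using Suc nonneg by (intro sum_nonneg mult_nonneg_nonneg) auto
  finally show ?case .
qed (use B in auto)

lemma pow_mat_mult_vec_fixed:
  assumes B: "B \<in> carrier_mat n n" and v: "v \<in> carrier_vec n" and fixed: "B *\<^sub>v v = v"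
  shows "(B ^\<^sub>m k) *\<^sub>v v = v"
proof (induction k)
  case (Suc k)
  have "(B ^\<^sub>m Suc k) *\<^sub>v v = (B ^\<^sub>m k) *\<^sub>v (B *\<^sub>v v)"
    using B v by (simp add: assoc_mult_mat_vec[of _ n n _ n])
  then show ?case using fixed Suc by simp
qed (use B v in auto)

text \<open>Summing \<open>u \<le> B u\<close> over all coordinates and using that the column sums are at most one
  forces equality in every coordinate and in every column-sum estimate.\<close>
lemma substochastic_subinvariant:
  fixes B :: "real mat"
  assumes B: "B \<in> carrier_mat n n" and nonneg: "\<forall>i<n. \<forall>j<n. 0 \<le> B $$ (i,j)"
    and col_le: "\<forall>k<n. (\<Sum>i<n. B $$ (i,k)) \<le> 1"
    and u: "u \<in> carrier_vec n" "\<forall>i<n. 0 \<le> u $ i" and sub: "\<forall>i<n. u $ i \<le> (B *\<^sub>v u) $ i"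
  shows "B *\<^sub>v u = u" and "\<And>k. k < n \<Longrightarrow> (\<Sum>i<n. B $$ (i,k)) < 1 \<Longrightarrow> u $ k = 0"
proof -
  have Bu: "(B *\<^sub>v u) $ i = (\<Sum>k<n. B $$ (i,k) * u $ k)" if "i < n" for i
    using mult_mat_vec_index_sum[OF B u(1) that] .
  have swap: "(\<Sum>i<n. (B *\<^sub>v u) $ i) = (\<Sum>k<n. (\<Sum>i<n. B $$ (i,k)) * u $ k)"
    by (simp add: Bu sum_distrib_right) (rule sum.swap)
  have le_u: "(\<Sum>k<n. (\<Sum>i<n. B $$ (i,k)) * u $ k) \<le> (\<Sum>k<n. u $ k)"
    using col_le u(2) mult_right_mono[of _ 1] by (intro sum_mono) fastforce
  have u_le: "(\<Sum>i<n. u $ i) \<le> (\<Sum>i<n. (B *\<^sub>v u) $ i)"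
    using sub by (intro sum_mono) auto
  have "(\<Sum>i<n. (B *\<^sub>v u) $ i - u $ i) = 0"
    using swap le_u u_le by (simp add: sum_subtractf)
  then have "\<forall>i<n. (B *\<^sub>v u) $ i = u $ i"
    using sub by (subst (asm) sum_nonneg_eq_0_iff) auto
  then show "B *\<^sub>v u = u" using B u(1) by (intro eq_vecI) auto
  have "(\<Sum>k<n. (1 - (\<Sum>i<n. B $$ (i,k))) * u $ k) = 0"
    using swap le_u u_le by (simp add: sum_subtractf left_diff_distrib)
  then have "\<forall>k<n. (1 - (\<Sum>i<n. B $$ (i,k))) * u $ k = 0"
    using col_le u(2) by (subst (asm) sum_nonneg_eq_0_iff) auto
  then show "u $ k = 0" if "k < n" "(\<Sum>i<n. B $$ (i,k)) < 1" for k
    using that by auto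
qed

text \<open>The vector vanishes at the deficient column and, being invariant under every power of \<open>B\<close>,
  everywhere else by irreducibility.\<close>
lemma irreducible_substochastic_subinvariant_eq_0:
  fixes B :: "real mat"
  assumes B: "B \<in> carrier_mat n n" and irr: "irreducible_mat B"
    and col_le: "\<forall>k<n. (\<Sum>i<n. B $$ (i,k)) \<le> 1"
    and b: "b < n" "(\<Sum>i<n. B $$ (i,b)) < 1"
    and u: "u \<in> carrier_vec n" "\<forall>i<n. 0 \<le> u $ i" and sub: "\<forall>i<n. u $ i \<le> (B *\<^sub>v u) $ i"
  shows "u = 0\<^sub>v n"
proof (rule eq_vecI)
  have nonneg: "\<forall>i<n. \<forall>j<n. 0 \<le> B $$ (i,j)"
    using irr B by (auto simp: irreducible_mat_def nonneg_mat_def)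
  note fixed = substochastic_subinvariant[OF B nonneg col_le u sub]
  fix a assume "a < dim_vec (0\<^sub>v n)"
  then have a: "a < n" by simp
  obtain k where pos: "(B ^\<^sub>m k) $$ (b,a) > 0"
    using irr B a b by (auto simp: irreducible_mat_def)
  have "(\<Sum>l<n. (B ^\<^sub>m k) $$ (b,l) * u $ l) = u $ b"
    using mult_mat_vec_index_sum[of "B ^\<^sub>m k" n n u b] pow_mat_mult_vec_fixed[OF B u(1) fixed(1)] B u b
    by simp
  also have "u $ b = 0" using fixed(2) b by blast
  finally have "(B ^\<^sub>m k) $$ (b,a) * u $ a = 0"
    using pow_mat_nonneg[OF B nonneg] u(2) a b by (subst (asm) sum_nonneg_eq_0_iff) auto
  then show "u $ a = 0\<^sub>v n $ a" using pos a by simp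
qed (use u in simp)

section \<open>Fixed points of block upper-triangular matrices\<close>

lemma transpose_mult_append_vec_upper_block:
  fixes A :: "'a::comm_ring_1 mat"
  assumes A: "A \<in> carrier_mat (nS + nR) (nS + nR)"
    and lower_left: "\<And>q p. nS \<le> q \<Longrightarrow> q < nS + nR \<Longrightarrow> p < nS \<Longrightarrow> A $$ (q,p) = 0"
    and y: "y \<in> carrier_vec nS" and z: "z \<in> carrier_vec nR"
  shows "transpose_mat A *\<^sub>v (y @\<^sub>v z)
    = vec nS (\<lambda>p. \<Sum>q<nS. A $$ (q,p) * y $ q)
      @\<^sub>v (transpose_mat (T_SR A nS nR) *\<^sub>v y + transpose_mat (T_RR A nS nR) *\<^sub>v z)"
proof (rule eq_vecI)
  have entry: "(transpose_mat A *\<^sub>v (y @\<^sub>v z)) $ p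
      = (\<Sum>q<nS. A $$ (q,p) * y $ q) + (\<Sum>k<nR. A $$ (nS + k, p) * z $ k)"
    if p: "p < nS + nR" for p
  proof -
    have "(transpose_mat A *\<^sub>v (y @\<^sub>v z)) $ p = (\<Sum>q<nS + nR. A $$ (q,p) * (y @\<^sub>v z) $ q)"
      using A y z p by (simp add: scalar_prod_def lessThan_atLeast0)
    also have "\<dots> = (\<Sum>q<nS. A $$ (q,p) * y $ q) + (\<Sum>k<nR. A $$ (nS + k, p) * z $ k)"
      using y z by (simp add: sum_lessThan_add)
    finally show ?thesis .
  qed
  fix p assume "p < dim_vec (vec nS (\<lambda>p. \<Sum>q<nS. A $$ (q,p) * y $ q)
      @\<^sub>v (transpose_mat (T_SR A nS nR) *\<^sub>v y + transpose_mat (T_RR A nS nR) *\<^sub>v z))"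
  then have p: "p < nS + nR" by (simp add: T_SR_def T_RR_def)
  show "(transpose_mat A *\<^sub>v (y @\<^sub>v z)) $ p = (vec nS (\<lambda>p. \<Sum>q<nS. A $$ (q,p) * y $ q)
      @\<^sub>v (transpose_mat (T_SR A nS nR) *\<^sub>v y + transpose_mat (T_RR A nS nR) *\<^sub>v z)) $ p"
  proof (cases "p < nS")
    case True
    then show ?thesis using entry[OF p] lower_left by (simp add: T_SR_def)
  next
    case False
    then obtain r where r: "p = nS + r" "r < nR" using p by (metis add_diff_inverse_nat add_less_cancel_left)
    then show ?thesis
      using entry[OF p] y z by (simp add: T_SR_def T_RR_def scalar_prod_def lessThan_atLeast0)
  qed
qed (use A in \<open>simp add: T_SR_def T_RR_def\<close>)

lemma fixed_point_iff_inverse: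
  fixes T :: "'a::comm_ring_1 mat"
  assumes T: "T \<in> carrier_mat n n" and Q: "Q \<in> carrier_mat n n"
    and left_inv: "Q * (1\<^sub>m n - T) = 1\<^sub>m n" and right_inv: "(1\<^sub>m n - T) * Q = 1\<^sub>m n"
    and c: "c \<in> carrier_vec n" and z: "z \<in> carrier_vec n"
  shows "z = c + T *\<^sub>v z \<longleftrightarrow> z = Q *\<^sub>v c"
proof -
  have E: "1\<^sub>m n - T \<in> carrier_mat n n" using T by (rule minus_carrier_mat)
  have "z = c + T *\<^sub>v z \<longleftrightarrow> (1\<^sub>m n - T) *\<^sub>v z = c"
    unfolding minus_mult_distrib_mat_vec[OF one_carrier_mat T z]
    using T c z by (auto simp: vec_eq_iff algebra_simps)
  also have "\<dots> \<longleftrightarrow> z = Q *\<^sub>v c"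
  proof
    assume "(1\<^sub>m n - T) *\<^sub>v z = c"
    then have "Q *\<^sub>v c = (Q * (1\<^sub>m n - T)) *\<^sub>v z" using Q E z by simp
    then show "z = Q *\<^sub>v c" using left_inv z by simp
  next
    assume "z = Q *\<^sub>v c"
    then have "(1\<^sub>m n - T) *\<^sub>v z = ((1\<^sub>m n - T) * Q) *\<^sub>v c" using Q E c by simp
    then show "(1\<^sub>m n - T) *\<^sub>v z = c" using right_inv c by simp
  qed
  finally show ?thesis .
qed

text \<open>Here \<open>A = [T\<^sub>S\<^sub>S T\<^sub>S\<^sub>R; 0 T\<^sub>R\<^sub>R]\<close> and \<open>y\<close> is a fixed point of \<open>T\<^sub>S\<^sub>S\<^sup>T\<close>; the matrix
  \<open>T_SR A nS nR * Q\<close> is \<open>W = T\<^sub>S\<^sub>R (I - T\<^sub>R\<^sub>R)\<^sup>-\<^sup>1\<close>.\<close>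
lemma upper_block_fixed_point_iff:
  fixes A :: "'a::comm_ring_1 mat"
  assumes A: "A \<in> carrier_mat (nS + nR) (nS + nR)"
    and lower_left: "\<And>q p. nS \<le> q \<Longrightarrow> q < nS + nR \<Longrightarrow> p < nS \<Longrightarrow> A $$ (q,p) = 0"
    and Q: "Q \<in> carrier_mat nR nR"
      "Q * (1\<^sub>m nR - T_RR A nS nR) = 1\<^sub>m nR" "(1\<^sub>m nR - T_RR A nS nR) * Q = 1\<^sub>m nR"
    and y: "y \<in> carrier_vec nS" and invariant: "\<And>p. p < nS \<Longrightarrow> (\<Sum>q<nS. A $$ (q,p) * y $ q) = y $ p"
    and z: "z \<in> carrier_vec nR"
  shows "transpose_mat A *\<^sub>v (y @\<^sub>v z) = y @\<^sub>v z \<longleftrightarrow> z = transpose_mat (T_SR A nS nR * Q) *\<^sub>v y"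
proof -
  let ?T = "T_RR A nS nR" and ?c = "transpose_mat (T_SR A nS nR) *\<^sub>v y"
  have T: "?T \<in> carrier_mat nR nR" and Tsr: "T_SR A nS nR \<in> carrier_mat nS nR"
    by (simp_all add: T_RR_def T_SR_def)
  have top: "vec nS (\<lambda>p. \<Sum>q<nS. A $$ (q,p) * y $ q) = y"
    using y invariant by (intro eq_vecI) auto
  have E: "1\<^sub>m nR - ?T \<in> carrier_mat nR nR" using T by (rule minus_carrier_mat)
  have transpose_E: "transpose_mat (1\<^sub>m nR - ?T) = 1\<^sub>m nR - transpose_mat ?T"
    using transpose_minus[OF one_carrier_mat T] by simp
  have "transpose_mat A *\<^sub>v (y @\<^sub>v z) = y @\<^sub>v (?c + transpose_mat ?T *\<^sub>v z)"
    using transpose_mult_append_vec_upper_block[OF A lower_left y z] top by simp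
  then have "transpose_mat A *\<^sub>v (y @\<^sub>v z) = y @\<^sub>v z \<longleftrightarrow> z = ?c + transpose_mat ?T *\<^sub>v z"
    using append_vec_eq[OF y y] by auto
  also have "\<dots> \<longleftrightarrow> z = transpose_mat Q *\<^sub>v ?c"
  proof (rule fixed_point_iff_inverse)
    show "transpose_mat Q * (1\<^sub>m nR - transpose_mat ?T) = 1\<^sub>m nR"
      using transpose_mult[OF E Q(1)] Q(3) transpose_E by simp
    show "(1\<^sub>m nR - transpose_mat ?T) * transpose_mat Q = 1\<^sub>m nR"
      using transpose_mult[OF Q(1) E] Q(2) transpose_E by simp
  qed (use T Q y z Tsr in auto)
  also have "transpose_mat Q *\<^sub>v ?c = transpose_mat (T_SR A nS nR * Q) *\<^sub>v y"
    using transpose_mult[OF Tsr Q(1)] Q(1) Tsr y by (simp add: assoc_mult_mat_vec[of _ nR nS _ nR])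
  finally show ?thesis .
qed

lemma fixed_point_with_prefix_unique:
  assumes y: "y \<in> carrier_vec n1" and z0: "z0 \<in> carrier_vec n2"
    and iff: "\<And>z. z \<in> carrier_vec n2 \<Longrightarrow> K *\<^sub>v (y @\<^sub>v z) = y @\<^sub>v z \<longleftrightarrow> z = z0"
  shows "y @\<^sub>v z0 = K *\<^sub>v (y @\<^sub>v z0)"
    and "\<forall>x \<in> carrier_vec (n1 + n2). x = K *\<^sub>v x \<and> (\<forall>i < n1. x $ i = y $ i) \<longrightarrow> x = y @\<^sub>v z0"
proof -
  show "y @\<^sub>v z0 = K *\<^sub>v (y @\<^sub>v z0)" using iff[OF z0] by simp
  show "\<forall>x \<in> carrier_vec (n1 + n2). x = K *\<^sub>v x \<and> (\<forall>i < n1. x $ i = y $ i) \<longrightarrow> x = y @\<^sub>v z0"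
  proof (intro ballI impI)
    fix x assume x: "x \<in> carrier_vec (n1 + n2)" and fixed: "x = K *\<^sub>v x \<and> (\<forall>i < n1. x $ i = y $ i)"
    have "vec_first x n1 = y" using fixed y by (intro eq_vecI) (auto simp: vec_first_def)
    then have x_split: "x = y @\<^sub>v vec_last x n2" using vec_first_last_append[OF x] by simp
    then have "vec_last x n2 = z0" using iff[of "vec_last x n2"] fixed by simp
    then show "x = y @\<^sub>v z0" using x_split by simp
  qed
qed

section \<open>Kronecker products with the identity\<close>

text \<open>Reading \<open>x \<in> \<real>\<^sup>n\<^sup>M\<close> as \<open>col{x\<^sub>0, \<dots>, x\<^sub>n\<^sub>-\<^sub>1}\<close> with \<open>x\<^sub>p \<in> \<real>\<^sup>M\<close>, \<open>kron_slice M m x\<close> collects the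
  \<open>m\<close>-th entries of the \<open>x\<^sub>p\<close>; multiplication by \<open>B \<otimes> I\<^sub>M\<close> acts on each slice separately.\<close>
definition kron_slice :: "nat \<Rightarrow> nat \<Rightarrow> 'a vec \<Rightarrow> 'a vec" where
  "kron_slice M m x = vec (dim_vec x div M) (\<lambda>p. x $ (p * M + m))"

lemma kron_slice_carrier:
  "x \<in> carrier_vec (n * M) \<Longrightarrow> m < M \<Longrightarrow> kron_slice M m x \<in> carrier_vec n"
  by (simp add: kron_slice_def)

lemma kron_slice_index:
  "x \<in> carrier_vec (n * M) \<Longrightarrow> m < M \<Longrightarrow> p < n \<Longrightarrow> kron_slice M m x $ p = x $ (p * M + m)"
  by (simp add: kron_slice_def)

lemma kron_slices_eq_iff:
  assumes x: "x \<in> carrier_vec (n * M)" and x': "x' \<in> carrier_vec (n * M)"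
  shows "x = x' \<longleftrightarrow> (\<forall>m<M. kron_slice M m x = kron_slice M m x')"
proof (intro iffI allI impI)
  assume slices: "\<forall>m<M. kron_slice M m x = kron_slice M m x'"
  show "x = x'"
  proof (rule eq_vecI)
    fix i assume "i < dim_vec x'"
    then have i: "i < n * M" using x' by simp
    then have M: "M > 0" by (cases M) auto
    have "i div M < n" using i by (simp add: less_mult_imp_div_less)
    then have "kron_slice M (i mod M) x $ (i div M) = kron_slice M (i mod M) x' $ (i div M)"
      using slices M by simp
    then show "x $ i = x' $ i"
      using kron_slice_index[OF x] kron_slice_index[OF x'] M \<open>i div M < n\<close> by simp
  qed (use x x' in simp)
qed simp

lemma kron_slice_append:
  assumes u: "u \<in> carrier_vec (a * M)" and v: "v \<in> carrier_vec (b * M)" and m: "m < M"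
  shows "kron_slice M m (u @\<^sub>v v) = kron_slice M m u @\<^sub>v kron_slice M m v"
proof (rule eq_vecI)
  have uv: "u @\<^sub>v v \<in> carrier_vec ((a + b) * M)" using u v by (simp add: add_mult_distrib)
  fix p assume "p < dim_vec (kron_slice M m u @\<^sub>v kron_slice M m v)"
  then have p: "p < a + b" using kron_slice_carrier[OF u m] kron_slice_carrier[OF v m] by simp
  show "kron_slice M m (u @\<^sub>v v) $ p = (kron_slice M m u @\<^sub>v kron_slice M m v) $ p"
  proof (cases "p < a")
    case True
    then show ?thesis
      using kron_slice_index[OF uv m p] kron_slice_index[OF u m] kron_slice_carrier[OF u m]
        kron_slice_carrier[OF v m] mult_add_less_mult[OF True m] u v p by simp
  next
    case False
    then obtain r where r: "p = a + r" "r < b" using p by (metis add_diff_inverse_nat add_less_cancel_left)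
    have "(a + r) * M + m = a * M + (r * M + m)" by (simp add: algebra_simps)
    then show ?thesis
      using kron_slice_index[OF uv m p] kron_slice_index[OF v m r(2)] kron_slice_carrier[OF u m]
        kron_slice_carrier[OF v m] mult_add_less_mult[OF r(2) m] u v r by simp
  qed
qed (use u v m in \<open>simp add: kron_slice_def add_mult_distrib[symmetric]\<close>)

lemma kron_mat_one_carrier:
  "B \<in> carrier_mat r c \<Longrightarrow> kron_mat B (1\<^sub>m M) \<in> carrier_mat (r * M) (c * M)"
  by (simp add: kron_mat_def)

lemma kron_slice_transpose_kron_one:
  fixes B :: "'a::comm_ring_1 mat"
  assumes B: "B \<in> carrier_mat r c" and x: "x \<in> carrier_vec (r * M)" and m: "m < M"
  shows "kron_slice M m (transpose_mat (kron_mat B (1\<^sub>m M)) *\<^sub>v x)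
    = transpose_mat B *\<^sub>v kron_slice M m x"
proof (rule eq_vecI)
  let ?K = "kron_mat B (1\<^sub>m M)"
  have K: "?K \<in> carrier_mat (r * M) (c * M)" using B by (rule kron_mat_one_carrier)
  have Kx: "transpose_mat ?K *\<^sub>v x \<in> carrier_vec (c * M)" using K x by simp
  fix p assume "p < dim_vec (transpose_mat B *\<^sub>v kron_slice M m x)"
  then have p: "p < c" using B by simp
  have "(transpose_mat ?K *\<^sub>v x) $ (p * M + m) = (\<Sum>j<r * M. ?K $$ (j, p * M + m) * x $ j)"
    using K x mult_add_less_mult[OF p m] by (simp add: scalar_prod_def lessThan_atLeast0)
  also have "\<dots> = (\<Sum>q<r. \<Sum>t<M. ?K $$ (q * M + t, p * M + m) * x $ (q * M + t))"
    by (rule sum_lessThan_mult)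
  also have "\<dots> = (\<Sum>q<r. B $$ (q,p) * x $ (q * M + m))"
  proof (rule sum.cong[OF refl])
    fix q assume q: "q \<in> {..<r}"
    have "?K $$ (q * M + t, p * M + m) = (if t = m then B $$ (q,p) else 0)" if "t < M" for t
      using mult_add_less_mult[of q r t M] mult_add_less_mult[OF p m] q that m B
      by (simp add: kron_mat_def)
    then have "(\<Sum>t<M. ?K $$ (q * M + t, p * M + m) * x $ (q * M + t))
        = (\<Sum>t<M. if t = m then B $$ (q,p) * x $ (q * M + m) else 0)"
      by (intro sum.cong) auto
    then show "(\<Sum>t<M. ?K $$ (q * M + t, p * M + m) * x $ (q * M + t)) = B $$ (q,p) * x $ (q * M + m)"
      using m by simp
  qed
  also have "\<dots> = (transpose_mat B *\<^sub>v kron_slice M m x) $ p"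
    using B p kron_slice_carrier[OF x m] kron_slice_index[OF x m]
    by (simp add: scalar_prod_def lessThan_atLeast0)
  finally show "kron_slice M m (transpose_mat ?K *\<^sub>v x) $ p = (transpose_mat B *\<^sub>v kron_slice M m x) $ p"
    using kron_slice_index[OF Kx m p] by simp
qed (use B x m in \<open>simp add: kron_slice_def kron_mat_def\<close>)

lemma transpose_kron_one_fixed_point_iff:
  fixes A :: "'a::comm_ring_1 mat"
  assumes A: "A \<in> carrier_mat (nS + nR) (nS + nR)" and W: "W \<in> carrier_mat nS nR"
    and y: "y \<in> carrier_vec (nS * M)" and z: "z \<in> carrier_vec (nR * M)"
    and slices: "\<And>m u. m < M \<Longrightarrow> u \<in> carrier_vec nR \<Longrightarrow>
      transpose_mat A *\<^sub>v (kron_slice M m y @\<^sub>v u) = kron_slice M m y @\<^sub>v u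
      \<longleftrightarrow> u = transpose_mat W *\<^sub>v kron_slice M m y"
  shows "transpose_mat (kron_mat A (1\<^sub>m M)) *\<^sub>v (y @\<^sub>v z) = y @\<^sub>v z
    \<longleftrightarrow> z = transpose_mat (kron_mat W (1\<^sub>m M)) *\<^sub>v y"
proof -
  have yz: "y @\<^sub>v z \<in> carrier_vec ((nS + nR) * M)" using y z by (simp add: add_mult_distrib)
  have lhs: "transpose_mat (kron_mat A (1\<^sub>m M)) *\<^sub>v (y @\<^sub>v z) \<in> carrier_vec ((nS + nR) * M)"
    using kron_mat_one_carrier[OF A] yz by (intro mult_mat_vec_carrier) simp_all
  have rhs: "transpose_mat (kron_mat W (1\<^sub>m M)) *\<^sub>v y \<in> carrier_vec (nR * M)"
    using kron_mat_one_carrier[OF W] y by (intro mult_mat_vec_carrier) simp_all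
  have "transpose_mat (kron_mat A (1\<^sub>m M)) *\<^sub>v (y @\<^sub>v z) = y @\<^sub>v z \<longleftrightarrow>
    (\<forall>m<M. transpose_mat A *\<^sub>v (kron_slice M m y @\<^sub>v kron_slice M m z)
      = kron_slice M m y @\<^sub>v kron_slice M m z)"
    using kron_slices_eq_iff[OF lhs yz] kron_slice_transpose_kron_one[OF A yz]
      kron_slice_append[OF y z] by simp
  also have "\<dots> \<longleftrightarrow> (\<forall>m<M. kron_slice M m z = transpose_mat W *\<^sub>v kron_slice M m y)"
    using slices kron_slice_carrier[OF z] by simp
  also have "\<dots> \<longleftrightarrow> z = transpose_mat (kron_mat W (1\<^sub>m M)) *\<^sub>v y"
    using kron_slices_eq_iff[OF z rhs] kron_slice_transpose_kron_one[OF W y] by simp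
  finally show ?thesis .
qed

lemma vcol_append: "vcol (xs @ ys) = vcol xs @\<^sub>v vcol ys"
proof (induction xs)
  case Nil
  show ?case by (intro eq_vecI) (auto simp: vcol_def)
next
  case (Cons v xs)
  have "vcol ((v # xs) @ ys) = v @\<^sub>v vcol (xs @ ys)" by (simp add: vcol_def)
  also have "\<dots> = (v @\<^sub>v vcol xs) @\<^sub>v vcol ys" using Cons by (intro eq_vecI) auto
  finally show ?case by (simp add: vcol_def)
qed

lemma vcol_single: "vcol [v] = v"
  by (intro eq_vecI) (auto simp: vcol_def)

lemma kron_vec_ones_carrier:
  "u \<in> carrier_vec M \<Longrightarrow> kron_vec (ones_vec n) u \<in> carrier_vec (n * M)"
  by (simp add: kron_vec_def ones_vec_def)

lemma kron_slice_kron_vec_ones: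
  fixes u :: "'a::semiring_1 vec"
  assumes "u \<in> carrier_vec M" "m < M"
  shows "kron_slice M m (kron_vec (ones_vec n) u) = vec n (\<lambda>_. u $ m)"
  using assms mult_add_less_mult[of _ n m M]
  by (intro eq_vecI) (auto simp: kron_slice_def kron_vec_def ones_vec_def)

lemma vcol_kron_ones_carrier:
  assumes "\<forall>s<S. w s \<in> carrier_vec M"
  shows "vcol (map (\<lambda>s. kron_vec (ones_vec (Nsz s)) (w s)) [0..<S]) \<in> carrier_vec (offs Nsz S * M)"
  using assms
proof (induction S)
  case (Suc S)
  then show ?case
    using kron_vec_ones_carrier[of "w S" M "Nsz S"]
    by (simp add: vcol_append vcol_single offs_Suc add_mult_distrib)
qed (simp add: vcol_def offs_def)

lemma kron_slice_vcol_kron_ones: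
  fixes w :: "nat \<Rightarrow> 'a::semiring_1 vec"
  assumes w: "\<forall>s<S. w s \<in> carrier_vec M" and m: "m < M"
  shows "kron_slice M m (vcol (map (\<lambda>s. kron_vec (ones_vec (Nsz s)) (w s)) [0..<S]))
    = vec (offs Nsz S) (\<lambda>p. w (block_of Nsz p) $ m)"
  using w
proof (induction S)
  case 0
  show ?case by (intro eq_vecI) (auto simp: vcol_def offs_def kron_slice_def)
next
  case (Suc S)
  let ?v = "vcol (map (\<lambda>s. kron_vec (ones_vec (Nsz s)) (w s)) [0..<S])"
  have wS: "w S \<in> carrier_vec M" using Suc.prems by simp
  have "kron_slice M m (?v @\<^sub>v kron_vec (ones_vec (Nsz S)) (w S))
      = vec (offs Nsz S) (\<lambda>p. w (block_of Nsz p) $ m) @\<^sub>v vec (Nsz S) (\<lambda>_. w S $ m)"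
    using kron_slice_append[OF vcol_kron_ones_carrier kron_vec_ones_carrier[OF wS] m]
      Suc kron_slice_kron_vec_ones[OF wS m] by simp
  also have "\<dots> = vec (offs Nsz (Suc S)) (\<lambda>p. w (block_of Nsz p) $ m)"
  proof (rule eq_vecI)
    fix p assume "p < dim_vec (vec (offs Nsz (Suc S)) (\<lambda>p. w (block_of Nsz p) $ m))"
    then have p: "p < offs Nsz S + Nsz S" by (simp add: offs_Suc)
    show "(vec (offs Nsz S) (\<lambda>p. w (block_of Nsz p) $ m) @\<^sub>v vec (Nsz S) (\<lambda>_. w S $ m)) $ p
        = vec (offs Nsz (Suc S)) (\<lambda>p. w (block_of Nsz p) $ m) $ p"
    proof (cases "p < offs Nsz S")
      case False
      then obtain a where "p = offs Nsz S + a" "a < Nsz S"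
        using p by (metis add_diff_inverse_nat add_less_cancel_left)
      then show ?thesis using block_of_offs_add[of a Nsz S] by (simp add: offs_Suc)
    qed (use p in \<open>simp add: offs_Suc\<close>)
  qed (simp add: offs_Suc)
  finally show ?case by (simp add: vcol_append vcol_single)
qed

locale weakly_connected =
  fixes S R :: nat and Nsz :: "nat \<Rightarrow> nat" and A :: "real mat"
  assumes A_carrier: "A \<in> carrier_mat (offs Nsz (S+R)) (offs Nsz (S+R))"
    and A_stoch: "left_stochastic A"
    and A_blocks: "\<forall>i<S+R. \<forall>j<S+R. \<forall>a<Nsz i. \<forall>b<Nsz j.
                     \<not> (i = j \<or> (i < j \<and> S \<le> j)) \<longrightarrow> A $$ (offs Nsz i + a, offs Nsz j + b) = 0"
    and A_R: "\<forall>r\<in>{S..<S+R}. irreducible_mat (subblock A Nsz r) \<and>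
                (\<exists>b<Nsz r. (\<Sum>a<Nsz r. subblock A Nsz r $$ (a,b)) < 1)"
begin

abbreviation N where "N \<equiv> offs Nsz (S+R)"
abbreviation NgS where "NgS \<equiv> offs Nsz S"
abbreviation NgR where "NgR \<equiv> N - NgS"

lemma NgS_le_N: "NgS \<le> N"
  by (simp add: offs_mono)

lemma A_col_sum: "k < N \<Longrightarrow> (\<Sum>l<N. A $$ (l,k)) = 1"
  using A_carrier A_stoch by (auto simp: left_stochastic_def)

lemma A_nonneg: "l < N \<Longrightarrow> k < N \<Longrightarrow> 0 \<le> A $$ (l,k)"
  using A_carrier A_stoch by (auto simp: left_stochastic_def nonneg_mat_def)

lemma A_eq_0:
  assumes l: "l < N" and k: "k < N" and "block_of Nsz l \<noteq> block_of Nsz k"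
    and "\<not> (block_of Nsz l < block_of Nsz k \<and> S \<le> block_of Nsz k)"
  shows "A $$ (l,k) = 0"
proof -
  obtain a where a: "l = offs Nsz (block_of Nsz l) + a" "a < Nsz (block_of Nsz l)"
    using block_of_decomp[OF l] .
  obtain b where b: "k = offs Nsz (block_of Nsz k) + b" "b < Nsz (block_of Nsz k)"
    using block_of_decomp[OF k] .
  show ?thesis
    using A_blocks[rule_format, OF block_of_bounds(1)[OF l] block_of_bounds(1)[OF k] a(2) b(2)]
      assms(3,4) a(1) b(1) by simp
qed

lemma A_eq_0_below_blocks:
  "l < N \<Longrightarrow> k < N \<Longrightarrow> block_of Nsz k < block_of Nsz l \<Longrightarrow> A $$ (l,k) = 0"
  by (rule A_eq_0) auto

lemma A_eq_0_S_column:
  assumes "l < N" "k < NgS" "block_of Nsz l \<noteq> block_of Nsz k"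
  shows "A $$ (l,k) = 0"
proof (rule A_eq_0)
  show "k < N" using assms(2) NgS_le_N by simp
  then show "\<not> (block_of Nsz l < block_of Nsz k \<and> S \<le> block_of Nsz k)"
    using block_of_less_iff[of k Nsz "S+R" S] assms(2) by simp
qed (use assms in auto)

lemma A_carrier_split: "A \<in> carrier_mat (NgS + NgR) (NgS + NgR)"
  using A_carrier NgS_le_N by simp

lemma A_lower_left_eq_0:
  assumes "NgS \<le> l" "l < NgS + NgR" "k < NgS"
  shows "A $$ (l,k) = 0"
proof (rule A_eq_0_S_column)
  have "block_of Nsz k < S" "\<not> block_of Nsz l < S"
    using block_of_less_iff[of _ Nsz "S+R" S] assms NgS_le_N by auto
  then show "block_of Nsz l \<noteq> block_of Nsz k" by auto
qed (use assms NgS_le_N in auto)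

lemma S_block_constant_invariant:
  assumes const: "\<forall>p<NgS. \<forall>q<NgS. block_of Nsz p = block_of Nsz q \<longrightarrow> y $ p = y $ q"
    and p: "p < NgS"
  shows "(\<Sum>q<NgS. A $$ (q,p) * y $ q) = y $ p"
proof -
  have "(\<Sum>q<NgS. A $$ (q,p) * y $ q) = (\<Sum>q<NgS. A $$ (q,p) * y $ p)"
  proof (rule sum.cong[OF refl])
    fix q assume q: "q \<in> {..<NgS}"
    show "A $$ (q,p) * y $ q = A $$ (q,p) * y $ p"
    proof (cases "block_of Nsz q = block_of Nsz p")
      case True
      then have "y $ q = y $ p" using const q p by blast
      then show ?thesis by simp
    next
      case False
      have "q < N" using q NgS_le_N by simp
      then show ?thesis using A_eq_0_S_column[OF _ p False] by simp
    qed
  qed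
  also have "(\<Sum>q<NgS. A $$ (q,p) * y $ p) = (\<Sum>q<N. A $$ (q,p)) * y $ p"
  proof -
    have "(\<Sum>r<NgR. A $$ (NgS + r, p)) = 0"
      using A_lower_left_eq_0 p by (intro sum.neutral) auto
    then have "(\<Sum>q<N. A $$ (q,p)) = (\<Sum>q<NgS. A $$ (q,p))"
      using sum_lessThan_add[where a = NgS and b = NgR and f = "\<lambda>q. A $$ (q,p)"] NgS_le_N by simp
    then show ?thesis by (simp add: sum_distrib_right)
  qed
  finally show ?thesis using A_col_sum p NgS_le_N by simp
qed

lemma subblock_col_sum_le:
  assumes j: "j < S+R" and b: "b < Nsz j"
  shows "(\<Sum>a<Nsz j. subblock A Nsz j $$ (a,b)) \<le> 1"
proof -
  have block_N: "offs Nsz j + Nsz j \<le> N"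
    using offs_mono[of "Suc j" "S+R" Nsz] j by (simp add: offs_Suc)
  have "(\<Sum>a<Nsz j. subblock A Nsz j $$ (a,b))
      = (\<Sum>l\<in>(\<lambda>a. offs Nsz j + a) ` {..<Nsz j}. A $$ (l, offs Nsz j + b))"
    using b by (simp add: subblock_def sum.reindex)
  also have "\<dots> \<le> (\<Sum>l<N. A $$ (l, offs Nsz j + b))"
    using block_N b A_nonneg by (intro sum_mono2) auto
  also have "\<dots> = 1" using A_col_sum block_N b by simp
  finally show ?thesis .
qed

lemma R_block_row_sum:
  assumes j: "j < S+R" and a: "a < Nsz j"
    and higher: "\<forall>q<N. j < block_of Nsz q \<longrightarrow> U q = 0"
  shows "(\<Sum>q<N. A $$ (offs Nsz j + a, q) * U q)
    = (subblock A Nsz j *\<^sub>v vec (Nsz j) (\<lambda>b. U (offs Nsz j + b))) $ a"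
proof -
  let ?p = "offs Nsz j + a"
  have p: "?p < N" "block_of Nsz ?p = j"
    using offs_mono[of "Suc j" "S+R" Nsz] j a block_of_offs_add[of a Nsz j] by (auto simp: offs_Suc)
  have "(\<Sum>q<N. A $$ (?p, q) * U q) = (\<Sum>b<Nsz j. A $$ (?p, offs Nsz j + b) * U (offs Nsz j + b))"
  proof (rule sum_lessThan_offs_block[OF j], intro allI impI)
    fix q assume "q < N" "block_of Nsz q \<noteq> j"
    then show "A $$ (?p, q) * U q = 0"
      using A_eq_0_below_blocks[OF p(1)] higher p(2) by (cases "block_of Nsz q < j") auto
  qed
  also have "\<dots> = (subblock A Nsz j *\<^sub>v vec (Nsz j) (\<lambda>b. U (offs Nsz j + b))) $ a"
    using a by (simp add: subblock_def scalar_prod_def lessThan_atLeast0)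
  finally show ?thesis .
qed

lemma R_block_subinvariant_eq_0:
  assumes j: "S \<le> j" "j < S+R" and U_nonneg: "\<forall>p<N. 0 \<le> U p"
    and sub: "\<forall>p. NgS \<le> p \<and> p < N \<longrightarrow> U p \<le> (\<Sum>q<N. A $$ (p,q) * U q)"
    and higher: "\<forall>q<N. j < block_of Nsz q \<longrightarrow> U q = 0"
  shows "\<forall>a<Nsz j. U (offs Nsz j + a) = 0"
proof -
  let ?B = "subblock A Nsz j" and ?u = "vec (Nsz j) (\<lambda>b. U (offs Nsz j + b))"
  have B: "?B \<in> carrier_mat (Nsz j) (Nsz j)" by (simp add: subblock_def)
  have irr: "irreducible_mat ?B" and "\<exists>b<Nsz j. (\<Sum>a<Nsz j. ?B $$ (a,b)) < 1"
    using A_R j by auto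
  then obtain b where b: "b < Nsz j" "(\<Sum>a<Nsz j. ?B $$ (a,b)) < 1" by blast
  have "?u = 0\<^sub>v (Nsz j)"
  proof (rule irreducible_substochastic_subinvariant_eq_0[OF B irr _ b])
    show "\<forall>k<Nsz j. (\<Sum>i<Nsz j. ?B $$ (i,k)) \<le> 1"
      using subblock_col_sum_le j by auto
    show "\<forall>a<Nsz j. ?u $ a \<le> (?B *\<^sub>v ?u) $ a"
    proof (intro allI impI)
      fix a assume a: "a < Nsz j"
      have "NgS \<le> offs Nsz j + a" "offs Nsz j + a < N"
        using offs_mono[of S j Nsz] offs_mono[of "Suc j" "S+R" Nsz] j a by (auto simp: offs_Suc)
      then have "U (offs Nsz j + a) \<le> (\<Sum>q<N. A $$ (offs Nsz j + a, q) * U q)"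
        using sub by blast
      then show "?u $ a \<le> (?B *\<^sub>v ?u) $ a"
        using R_block_row_sum[OF j(2) a higher] a by simp
    qed
    show "\<forall>a<Nsz j. 0 \<le> ?u $ a"
      using U_nonneg offs_mono[of "Suc j" "S+R" Nsz] j by (auto simp: offs_Suc)
  qed simp
  then show ?thesis by (metis index_vec index_zero_vec(1))
qed

text \<open>Backward induction over the sub-networks of group \<open>R\<close>: rows of sub-network \<open>j\<close> only see
  sub-networks \<open>\<ge> j\<close>, on which the vector already vanishes except on block \<open>j\<close> itself.\<close>
lemma subinvariant_eq_0:
  assumes U_nonneg: "\<forall>p<N. 0 \<le> U p" and U_S: "\<forall>p<NgS. U p = 0"
    and sub: "\<forall>p. NgS \<le> p \<and> p < N \<longrightarrow> U p \<le> (\<Sum>q<N. A $$ (p,q) * U q)"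
    and p: "p < N"
  shows "U p = 0"
proof -
  have on_block: "U q = 0"
    if "q < N" "\<forall>a<Nsz (block_of Nsz q). U (offs Nsz (block_of Nsz q) + a) = 0" for q
    using block_of_decomp[OF \<open>q < N\<close>] that(2) by metis
  have blocks: "\<forall>a<Nsz j. U (offs Nsz j + a) = 0" if "S \<le> j" "j < S+R" for j
    using that
  proof (induction "S+R-j" arbitrary: j rule: less_induct)
    case less
    have "\<forall>q<N. j < block_of Nsz q \<longrightarrow> U q = 0"
    proof (intro allI impI)
      fix q assume q: "q < N" "j < block_of Nsz q"
      have "block_of Nsz q < S + R" by (rule block_of_bounds(1)[OF q(1)])
      then have "S + R - block_of Nsz q < S + R - j" "S \<le> block_of Nsz q" "block_of Nsz q < S + R"
        using less.prems q(2) by linarith+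
      then show "U q = 0" using on_block[OF q(1)] less.hyps by blast
    qed
    then show ?case by (rule R_block_subinvariant_eq_0[OF less.prems U_nonneg sub])
  qed
  show ?thesis
  proof (cases "p < NgS")
    case False
    then have "S \<le> block_of Nsz p" using block_of_less_iff[OF p, of S] by simp
    then show ?thesis using on_block[OF p] blocks block_of_bounds(1)[OF p] by blast
  qed (use U_S in simp)
qed

lemma I_minus_T_RR_kernel:
  assumes v: "v \<in> carrier_vec NgR" and ker: "(1\<^sub>m NgR - T_RR A NgS NgR) *\<^sub>v v = 0\<^sub>v NgR"
  shows "v = 0\<^sub>v NgR"
proof -
  let ?T = "T_RR A NgS NgR"
  have T: "?T \<in> carrier_mat NgR NgR" by (simp add: T_RR_def)
  have "v - ?T *\<^sub>v v = 0\<^sub>v NgR"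
    using ker minus_mult_distrib_mat_vec[OF one_carrier_mat T v] v by simp
  then have fixed: "v $ i = (\<Sum>k<NgR. A $$ (NgS + i, NgS + k) * v $ k)" if i: "i < NgR" for i
  proof -
    have "(v - ?T *\<^sub>v v) $ i = 0"
      using \<open>v - ?T *\<^sub>v v = 0\<^sub>v NgR\<close> i by simp
    then have "v $ i = (?T *\<^sub>v v) $ i" using i v T by simp
    then show ?thesis using i v by (simp add: T_RR_def scalar_prod_def lessThan_atLeast0)
  qed
  define U where "U p = (if p < NgS then 0 else \<bar>v $ (p - NgS)\<bar>)" for p
  have sub: "U p \<le> (\<Sum>q<N. A $$ (p,q) * U q)" if p: "NgS \<le> p" "p < N" for p
  proof -
    have "U p = \<bar>\<Sum>k<NgR. A $$ (p, NgS + k) * v $ k\<bar>"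
      using fixed[of "p - NgS"] p by (simp add: U_def)
    also have "\<dots> \<le> (\<Sum>k<NgR. \<bar>A $$ (p, NgS + k) * v $ k\<bar>)" by (rule sum_abs)
    also have "\<dots> = (\<Sum>k<NgR. A $$ (p, NgS + k) * U (NgS + k))"
      using A_nonneg p by (intro sum.cong refl) (auto simp: U_def abs_mult)
    also have "\<dots> = (\<Sum>q<N. A $$ (p,q) * U q)"
      using sum_lessThan_add[where a = NgS and b = NgR and f = "\<lambda>q. A $$ (p,q) * U q"] NgS_le_N
      by (simp add: U_def)
    finally show ?thesis .
  qed
  have U_nonneg: "\<forall>p<N. 0 \<le> U p" and U_S: "\<forall>p<NgS. U p = 0" by (simp_all add: U_def)
  show ?thesis
  proof (rule eq_vecI)
    fix i assume i: "i < dim_vec (0\<^sub>v NgR)"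
    then have "U (NgS + i) = 0"
      using subinvariant_eq_0[OF U_nonneg U_S] sub by simp
    then show "v $ i = 0\<^sub>v NgR $ i" using i by (simp add: U_def)
  qed (use v in simp)
qed

lemma I_minus_T_RR_inverse:
  obtains Q where "Q \<in> carrier_mat NgR NgR"
    "Q * (1\<^sub>m NgR - T_RR A NgS NgR) = 1\<^sub>m NgR" "(1\<^sub>m NgR - T_RR A NgS NgR) * Q = 1\<^sub>m NgR"
    "W_mat A NgS NgR = T_SR A NgS NgR * Q"
proof -
  let ?E = "1\<^sub>m NgR - T_RR A NgS NgR"
  have E: "?E \<in> carrier_mat NgR NgR"
    by (rule minus_carrier_mat) (simp add: T_RR_def)
  have "det ?E \<noteq> 0"
    using det_0_iff_vec_prod_zero_field[OF E] I_minus_T_RR_kernel by blast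
  then have "mat_inverse ?E \<noteq> None"
    using mat_inverse(1)[OF E, of "()"] det_non_zero_imp_unit[OF E, of "()"] by blast
  then obtain Q where Q: "mat_inverse ?E = Some Q" by blast
  show thesis
    by (rule that) (use mat_inverse(2)[OF E Q] in \<open>auto simp: W_mat_def Q\<close>)
qed

lemma W_mat_carrier: "W_mat A NgS NgR \<in> carrier_mat NgS NgR"
proof -
  obtain Q where "Q \<in> carrier_mat NgR NgR" "W_mat A NgS NgR = T_SR A NgS NgR * Q"
    by (rule I_minus_T_RR_inverse)
  moreover have "T_SR A NgS NgR \<in> carrier_mat NgS NgR" by (simp add: T_SR_def)
  ultimately show ?thesis by (metis mult_carrier_mat)
qed

lemma kron_fixed_point_iff:
  fixes w :: "nat \<Rightarrow> real vec"
  assumes w: "\<forall>s<S. w s \<in> carrier_vec M" and z: "z \<in> carrier_vec (NgR * M)"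
  defines "\<omega>star \<equiv> vcol (map (\<lambda>s. kron_vec (ones_vec (Nsz s)) (w s)) [0..<S])"
  shows "transpose_mat (kron_mat A (1\<^sub>m M)) *\<^sub>v (\<omega>star @\<^sub>v z) = \<omega>star @\<^sub>v z
    \<longleftrightarrow> z = transpose_mat (kron_mat (W_mat A NgS NgR) (1\<^sub>m M)) *\<^sub>v \<omega>star"
proof (rule transpose_kron_one_fixed_point_iff[OF A_carrier_split W_mat_carrier _ z])
  show \<omega>star: "\<omega>star \<in> carrier_vec (NgS * M)"
    unfolding \<omega>star_def by (rule vcol_kron_ones_carrier[OF w])
  obtain Q where Q: "Q \<in> carrier_mat NgR NgR"
      "Q * (1\<^sub>m NgR - T_RR A NgS NgR) = 1\<^sub>m NgR" "(1\<^sub>m NgR - T_RR A NgS NgR) * Q = 1\<^sub>m NgR"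
    and W: "W_mat A NgS NgR = T_SR A NgS NgR * Q"
    by (rule I_minus_T_RR_inverse)
  fix m and u :: "real vec" assume m: "m < M" and u: "u \<in> carrier_vec NgR"
  let ?y = "vec NgS (\<lambda>p. w (block_of Nsz p) $ m)"
  have slice: "kron_slice M m \<omega>star = ?y"
    unfolding \<omega>star_def by (rule kron_slice_vcol_kron_ones[OF w m])
  have y: "?y \<in> carrier_vec NgS" by simp
  have invariant: "\<And>p. p < NgS \<Longrightarrow> (\<Sum>q<NgS. A $$ (q,p) * ?y $ q) = ?y $ p"
    by (rule S_block_constant_invariant) auto
  from upper_block_fixed_point_iff[OF A_carrier_split A_lower_left_eq_0 Q y invariant u]
  show "transpose_mat A *\<^sub>v (kron_slice M m \<omega>star @\<^sub>v u) = kron_slice M m \<omega>star @\<^sub>v u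
      \<longleftrightarrow> u = transpose_mat (W_mat A NgS NgR) *\<^sub>v kron_slice M m \<omega>star"
    unfolding slice W by simp
qed

end

theorem lemma2:
  fixes S R M N NgS NgR :: nat and Nsz :: "nat \<Rightarrow> nat"
    and A :: "real mat" and w :: "nat \<Rightarrow> real vec"
  assumes S_pos: "S \<ge> 1"
    and Nsz_pos: "\<forall>j<S+R. Nsz j > 0"
    and N_def: "N = (\<Sum>j<S+R. Nsz j)"
    and NgS_def: "NgS = (\<Sum>j<S. Nsz j)"
    and NgR_def: "NgR = (\<Sum>j\<in>{S..<S+R}. Nsz j)"
    and A_dim: "A \<in> carrier_mat N N"
    and A_stoch: "left_stochastic A"
    and A_blocks: "\<forall>i<S+R. \<forall>j<S+R. \<forall>a<Nsz i. \<forall>b<Nsz j.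
                     \<not> (i = j \<or> (i < j \<and> S \<le> j)) \<longrightarrow> A $$ (offs Nsz i + a, offs Nsz j + b) = 0"
    and A_S: "\<forall>s<S. left_stochastic (subblock A Nsz s) \<and> primitive_mat (subblock A Nsz s)"
    and A_R: "\<forall>r\<in>{S..<S+R}. irreducible_mat (subblock A Nsz r) \<and>
                (\<exists>b<Nsz r. (\<Sum>a<Nsz r. subblock A Nsz r $$ (a,b)) < 1)"
    and w_dim: "\<forall>s<S. w s \<in> carrier_vec M"
  shows "let \<A> = kron_mat A (1\<^sub>m M);
             \<W> = kron_mat (W_mat A NgS NgR) (1\<^sub>m M);
             \<omega>star = vcol (map (\<lambda>s. kron_vec (ones_vec (Nsz s)) (w s)) [0..<S]);
             \<omega>bullet = transpose_mat \<W> *\<^sub>v \<omega>star;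
             \<omega>inf = \<omega>star @\<^sub>v \<omega>bullet
         in \<omega>inf = transpose_mat \<A> *\<^sub>v \<omega>inf \<and>
            (\<forall>x \<in> carrier_vec (N * M).
               x = transpose_mat \<A> *\<^sub>v x \<and> (\<forall>i < NgS * M. x $ i = \<omega>star $ i) \<longrightarrow> x = \<omega>inf)"
proof -
  have N: "N = offs Nsz (S+R)" and NgS: "NgS = offs Nsz S"
    using N_def NgS_def by (simp_all add: offs_def)
  have N_split: "N = NgS + NgR"
    unfolding N_def NgS_def NgR_def by (simp add: lessThan_atLeast0 sum.atLeastLessThan_concat)
  have NgR: "NgR = offs Nsz (S+R) - offs Nsz S" using N_split N NgS by simp
  have wc: "weakly_connected S R Nsz A"
    using A_dim A_stoch A_blocks A_R unfolding N by unfold_locales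
  let ?\<omega>star = "vcol (map (\<lambda>s. kron_vec (ones_vec (Nsz s)) (w s)) [0..<S])"
  have \<omega>star: "?\<omega>star \<in> carrier_vec (offs Nsz S * M)"
    by (rule vcol_kron_ones_carrier[OF w_dim])
  have \<omega>bullet: "transpose_mat (kron_mat (W_mat A (offs Nsz S) (offs Nsz (S+R) - offs Nsz S)) (1\<^sub>m M))
      *\<^sub>v ?\<omega>star \<in> carrier_vec ((offs Nsz (S+R) - offs Nsz S) * M)"
    using kron_mat_one_carrier[OF weakly_connected.W_mat_carrier[OF wc]] \<omega>star
    by (intro mult_mat_vec_carrier) simp_all
  have carrier_split: "N * M = offs Nsz S * M + (offs Nsz (S+R) - offs Nsz S) * M"
    using N_split unfolding NgR NgS by (simp add: add_mult_distrib)
  show ?thesis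
    unfolding Let_def carrier_split NgR NgS
    using fixed_point_with_prefix_unique[OF \<omega>star \<omega>bullet weakly_connected.kron_fixed_point_iff[OF wc w_dim]]
    by simp
qed

end
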